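(* Consider the uplink system described in the context, with $U$ users, user $u$ having $N_u$ transmit antennas, $L_u$ propagation paths, power budget $P_u>0$ and aperture $W_u>0$. Let $C^*$ denote the supremum of $$C(\mathbf Q_1,\dots,\mathbf Q_U,\mathbf w_1,\dots,\mathbf w_U)=\log\Big|\sum_{u=1}^U \mathbf G_u(\mathbf w_u)\mathbf Q_u\mathbf G_u^H(\mathbf w_u)+\mathbf I_M\Big|$$ over all $\mathbf Q_u\in\mathbb C^{N_u\times N_u}$ with $\mathbf Q_u\succeq \mathbf 0$, $\mathrm{tr}(\mathbf Q_u)\le P_u$, and all $\mathbf w_u=[w_{u,1},\dots,w_{u,N_u}]^T$ with $0\le w_{u,n}\le W_u$ and $w_{u,n}\neq w_{u,n'}$ for $n\ne n'$ ($u=1,\dots,U$). Then $C^*$ is upper bounded by the optimal value of the convex problem $$\max_{\tilde{\mathbf Q}_1,\dots,\tilde{\mathbf Q}_U}\ \log\Big|\sum_{u=1}^U M N_u \mathbf A_{u,\mathrm R}\boldsymbol\Gamma_u\tilde{\mathbf Q}_u\boldsymbol\Gamma_u^H\mathbf A_{u,\mathrm R}^H+\mathbf I_M\Big|\quad\text{s.t. } \tilde{\mathbf Q}_u\in\mathbb C^{L_u\times L_u},\ \tilde{\mathbf Q}_u\succeq\mathbf 0,\ \mathrm{tr}(\tilde{\mathbf Q}_u)\le L_uP_u,\ u=1,\dots,U.$$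
   Context: A base station (BS) has an $M$-antenna uniform linear array with spacing $d=\lambda/2$ ($\lambda$ the wavelength). User $u\in\{1,\dots,U\}$ has $N_u$ antennas placed at positions $w_{u,1},\dots,w_{u,N_u}\in[0,W_u]$ on a line. There are $L_u$ propagation paths between user $u$ and the BS, with complex gains $\gamma_{u,1},\dots,\gamma_{u,L_u}$, angles of arrival $\beta_{u,l}\in[0,\pi]$ and angles of departure $\theta_{u,l}\in[0,\pi]$. Define $\mathbf a_{u,\mathrm R}(\beta)=\frac1{\sqrt M}[1,e^{-j\frac{2\pi}{\lambda}d\cos\beta},\dots,e^{-j\frac{2\pi}{\lambda}(M-1)d\cos\beta}]^T$ and $\mathbf a_{u,\mathrm T}(\theta,\mathbf w_u)=\frac1{\sqrt{N_u}}[e^{-j\frac{2\pi}{\lambda}w_{u,1}\cos\theta},\dots,e^{-j\frac{2\pi}{\lambda}w_{u,N_u}\cos\theta}]^T$. Let $\boldsymbol\Gamma_u=\mathrm{diag}(\gamma_{u,1},\dots,\gamma_{u,L_u})$, $\mathbf A_{u,\mathrm R}=[\mathbf a_{u,\mathrm R}(\beta_{u,1}),\dots,\mathbf a_{u,\mathrm R}(\beta_{u,L_u})]\in\mathbb C^{M\times L_u}$, $\mathbf A_{u,\mathrm T}(\mathbf w_u)=[\mathbf a_{u,\mathrm T}(\theta_{u,1},\mathbf w_u),\dots,\mathbf a_{u,\mathrm T}(\theta_{u,L_u},\mathbf w_u)]\in\mathbb C^{N_u\times L_u}$, and the channel matrix $\mathbf G_u(\mathbf w_u)=\sqrt{MN_u}\,\mathbf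 A_{u,\mathrm R}\boldsymbol\Gamma_u\mathbf A_{u,\mathrm T}^H(\mathbf w_u)\in\mathbb C^{M\times N_u}$. $|\cdot|$ denotes determinant. *)

theory Defs
  imports "HOL-Analysis.Analysis" "Jordan_Normal_Form.Matrix" "Jordan_Normal_Form.Determinant"
begin

definition mat_ct :: "complex mat \<Rightarrow> complex mat" where
  "mat_ct A = mat (dim_col A) (dim_row A) (\<lambda>(i,j). cnj (A $$ (j,i)))"

definition psd_mat :: "nat \<Rightarrow> complex mat \<Rightarrow> bool" where
  "psd_mat n A \<longleftrightarrow> A \<in> carrier_mat n n \<and> mat_ct A = A \<and>
     (\<forall>x \<in> carrier_vec n. 0 \<le> Re (\<Sum>i<n. \<Sum>j<n. cnj (x $ i) * A $$ (i,j) * x $ j))"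

definition mtrace :: "complex mat \<Rightarrow> complex" where
  "mtrace A = (\<Sum>i<dim_row A. A $$ (i,i))"

fun msum :: "nat \<Rightarrow> (nat \<Rightarrow> complex mat) \<Rightarrow> nat \<Rightarrow> complex mat" where
  "msum n F 0 = 0\<^sub>m n n"
| "msum n F (Suc k) = msum n F k + F k"

definition A_R :: "real \<Rightarrow> real \<Rightarrow> nat \<Rightarrow> nat \<Rightarrow> (nat \<Rightarrow> real) \<Rightarrow> complex mat" where
  "A_R lam d M L beta = mat M L (\<lambda>(m,l).
      complex_of_real (1 / sqrt (real M)) *
      exp (- \<i> * complex_of_real (2 * pi / lam * real m * d * cos (beta l))))"

definition A_T :: "real \<Rightarrow> nat \<Rightarrow> nat \<Rightarrow> (nat \<Rightarrow> real) \<Rightarrow> (nat \<Rightarrow> real) \<Rightarrow> complex mat" where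
  "A_T lam N L theta w = mat N L (\<lambda>(n,l).
      complex_of_real (1 / sqrt (real N)) *
      exp (- \<i> * complex_of_real (2 * pi / lam * w n * cos (theta l))))"

definition Gam :: "nat \<Rightarrow> (nat \<Rightarrow> complex) \<Rightarrow> complex mat" where
  "Gam L g = mat L L (\<lambda>(i,j). if i = j then g i else 0)"

definition chan :: "real \<Rightarrow> real \<Rightarrow> nat \<Rightarrow> nat \<Rightarrow> nat \<Rightarrow> (nat \<Rightarrow> complex) \<Rightarrow>
    (nat \<Rightarrow> real) \<Rightarrow> (nat \<Rightarrow> real) \<Rightarrow> (nat \<Rightarrow> real) \<Rightarrow> complex mat" where
  "chan lam d M N L g beta theta w =
     complex_of_real (sqrt (real M * real N)) \<cdot>\<^sub>m
       (A_R lam d M L beta * Gam L g * mat_ct (A_T lam N L theta w))"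

definition logdet :: "complex mat \<Rightarrow> real" where
  "logdet X = ln (cmod (det X))"

end

theory Submission
  imports Defs
begin

(* For fixed antenna positions w_u the covariance Q_u reaches the receiver only through
   Qt_u = A_T^H Q_u A_T, since G_u Q_u G_u^H = M N_u A_R Gamma_u Qt_u Gamma_u^H A_R^H.
   Qt_u is again positive semidefinite, and each diagonal entry a^H Q_u a of Qt_u is at most
   tr(Q_u) |a|^2 = tr(Q_u), because the steering columns a of A_T have unit norm; hence
   tr(Qt_u) <= L_u P_u. So every feasible point of the original problem gives a feasible point
   of the relaxed problem with the same objective value. *)

lemma dim_mat_ct [simp]:
  "dim_row (mat_ct A) = dim_col A" "dim_col (mat_ct A) = dim_row A"
  by (simp_all add: mat_ct_def)

lemma index_mat_ct [simp]:
  "i < dim_col A \<Longrightarrow> j < dim_row A \<Longrightarrow> mat_ct A $$ (i, j) = cnj (A $$ (j, i))"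
  by (simp add: mat_ct_def)

lemma mat_ct_carrier [simp]: "A \<in> carrier_mat n m \<Longrightarrow> mat_ct A \<in> carrier_mat m n"
  unfolding carrier_mat_def by simp

lemma mat_ct_mat_ct [simp]: "mat_ct (mat_ct A) = A"
  by (rule eq_matI) simp_all

lemma mat_ct_smult: "mat_ct (c \<cdot>\<^sub>m A) = cnj c \<cdot>\<^sub>m mat_ct A"
  by (rule eq_matI) simp_all

lemma mat_ct_mult:
  assumes "dim_col A = dim_row B"
  shows "mat_ct (A * B) = mat_ct B * mat_ct A"
proof (rule eq_matI)
  fix i j
  assume "i < dim_row (mat_ct B * mat_ct A)" "j < dim_col (mat_ct B * mat_ct A)"
  then have i: "i < dim_col B" and j: "j < dim_row A"
    by simp_all
  have "mat_ct (A * B) $$ (i, j) = (\<Sum>k<dim_row B. cnj (A $$ (j, k)) * cnj (B $$ (k, i)))"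
    using i j assms by (simp add: scalar_prod_def atLeast0LessThan)
  also have "\<dots> = (mat_ct B * mat_ct A) $$ (i, j)"
    using i j assms by (simp add: scalar_prod_def atLeast0LessThan mult.commute)
  finally show "mat_ct (A * B) $$ (i, j) = (mat_ct B * mat_ct A) $$ (i, j)" .
qed simp_all

definition qform :: "nat \<Rightarrow> complex mat \<Rightarrow> (nat \<Rightarrow> complex) \<Rightarrow> complex" where
  "qform n A x = (\<Sum>i<n. \<Sum>j<n. cnj (x i) * A $$ (i, j) * x j)"

lemma qform_supported:
  assumes S: "S \<subseteq> {..<n}" and x: "\<And>k. k < n \<Longrightarrow> k \<notin> S \<Longrightarrow> x k = 0"
  shows "qform n A x = (\<Sum>i\<in>S. \<Sum>j\<in>S. cnj (x i) * A $$ (i, j) * x j)"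
proof -
  have "qform n A x = (\<Sum>i<n. \<Sum>j\<in>S. cnj (x i) * A $$ (i, j) * x j)"
    unfolding qform_def using S x by (intro sum.cong refl sum.mono_neutral_right) auto
  also have "\<dots> = (\<Sum>i\<in>S. \<Sum>j\<in>S. cnj (x i) * A $$ (i, j) * x j)"
    using S x by (intro sum.mono_neutral_right) auto
  finally show ?thesis .
qed

lemma psd_mat_carrier: "psd_mat n A \<Longrightarrow> A \<in> carrier_mat n n"
  by (simp add: psd_mat_def)

lemma psd_mat_hermitian: "psd_mat n A \<Longrightarrow> mat_ct A = A"
  by (simp add: psd_mat_def)

lemma psd_mat_qform_nonneg:
  assumes "psd_mat n A"
  shows "0 \<le> Re (qform n A x)"
proof -
  have "qform n A x = qform n A (vec_index (vec n x))"
    unfolding qform_def by (intro sum.cong) auto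
  moreover have "\<forall>v\<in>carrier_vec n. 0 \<le> Re (qform n A (vec_index v))"
    using assms by (simp add: psd_mat_def qform_def)
  ultimately show ?thesis
    using vec_carrier[of n x] by simp
qed

lemma psd_matI:
  assumes "A \<in> carrier_mat n n" "mat_ct A = A" "\<And>x. 0 \<le> Re (qform n A x)"
  shows "psd_mat n A"
  using assms unfolding psd_mat_def qform_def by blast

lemma psd_mat_entry_swap:
  assumes "psd_mat n A" "i < n" "j < n"
  shows "A $$ (j, i) = cnj (A $$ (i, j))"
proof -
  have "A \<in> carrier_mat n n" "mat_ct A = A"
    using assms(1) by (simp_all add: psd_mat_carrier psd_mat_hermitian)
  then show ?thesis
    using index_mat_ct[of j A i] assms(2,3) by simp
qed

lemma psd_mat_diag_real:
  assumes "psd_mat n A" "i < n"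
  shows "of_real (Re (A $$ (i, i))) = A $$ (i, i)"
  using psd_mat_entry_swap[OF assms assms(2)] by (simp add: Reals_cnj_iff)

lemma psd_mat_diag_nonneg:
  assumes "psd_mat n A" "i < n"
  shows "0 \<le> Re (A $$ (i, i))"
proof -
  have "qform n A (\<lambda>k. if k = i then 1 else 0) = A $$ (i, i)"
    using assms(2) by (subst qform_supported[where S = "{i}"]) auto
  then show ?thesis
    using psd_mat_qform_nonneg[OF assms(1), of "\<lambda>k. if k = i then 1 else 0"] by simp
qed

lemma Re_mtrace: "A \<in> carrier_mat n n \<Longrightarrow> Re (mtrace A) = (\<Sum>i<n. Re (A $$ (i, i)))"
  by (simp add: mtrace_def)

lemma psd_mat_trace_nonneg:
  assumes "psd_mat n A"
  shows "0 \<le> Re (mtrace A)"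
  unfolding Re_mtrace[OF psd_mat_carrier[OF assms]]
  using psd_mat_diag_nonneg[OF assms] by (auto intro: sum_nonneg)

lemma quadratic_nonneg_imp_le_mult:
  fixes a b C :: real
  assumes nonneg: "\<And>s. 0 \<le> a * s\<^sup>2 - 2 * s * C + b * C" and "a \<ge> 0" "b \<ge> 0" "C \<ge> 0"
  shows "C \<le> a * b"
proof (cases "a = 0")
  case True
  then have "0 \<le> - ((b + 2) * C)"
    using nonneg[of "b + 1"] by (simp add: algebra_simps)
  then show ?thesis
    using True assms(3,4) by (auto simp: mult_le_0_iff)
next
  case False
  with \<open>a \<ge> 0\<close> have "a > 0" by simp
  then have "0 \<le> C * (a * b - C)"
    using nonneg[of "C / a"] by (simp add: power2_eq_square field_simps)
  then show ?thesis
    using assms(2-4) by (cases "C = 0") (simp_all add: zero_le_mult_iff)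
qed

lemma psd_mat_entry_bound:
  assumes A: "psd_mat n A" and i: "i < n" and j: "j < n"
  shows "(cmod (A $$ (i, j)))\<^sup>2 \<le> Re (A $$ (i, i)) * Re (A $$ (j, j))"
proof (cases "i = j")
  case True
  have "cmod (A $$ (i, i)) = \<bar>Re (A $$ (i, i))\<bar>"
    using norm_of_real psd_mat_diag_real[OF A i] by metis
  then show ?thesis
    using True by (simp add: power2_eq_square)
next
  case False
  define a b c where "a = Re (A $$ (i, i))" and "b = Re (A $$ (j, j))" and "c = A $$ (i, j)"
  have entries: "A $$ (i, i) = of_real a" "A $$ (j, j) = of_real b" "A $$ (i, j) = c" "A $$ (j, i) = cnj c"
    using psd_mat_diag_real[OF A i] psd_mat_diag_real[OF A j] psd_mat_entry_swap[OF A i j]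
    by (simp_all add: a_def b_def c_def)
  have "0 \<le> a * s\<^sup>2 - 2 * s * (cmod c)\<^sup>2 + b * (cmod c)\<^sup>2" for s
  proof -
    let ?x = "\<lambda>k. if k = i then of_real s else if k = j then - cnj c else 0"
    have "qform n A ?x = (\<Sum>k\<in>{i, j}. \<Sum>m\<in>{i, j}. cnj (?x k) * A $$ (k, m) * ?x m)"
      using i j by (intro qform_supported) auto
    also have "\<dots> = of_real s * of_real a * of_real s - of_real s * c * cnj c
        - c * cnj c * of_real s + c * of_real b * cnj c"
      using False by (simp add: entries)
    also have "\<dots> = of_real a * of_real s * of_real s - 2 * of_real s * (c * cnj c) + of_real b * (c * cnj c)"
      by (simp add: algebra_simps)
    also have "\<dots> = of_real (a * s\<^sup>2 - 2 * s * (cmod c)\<^sup>2 + b * (cmod c)\<^sup>2)"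
      by (simp add: power2_eq_square flip: complex_norm_square)
    finally show ?thesis
      using psd_mat_qform_nonneg[OF A, of ?x] by simp
  qed
  then show ?thesis
    using psd_mat_diag_nonneg[OF A i] psd_mat_diag_nonneg[OF A j]
    unfolding a_def b_def c_def by (intro quadratic_nonneg_imp_le_mult) auto
qed

lemma psd_mat_qform_le_trace:
  assumes A: "psd_mat n A"
  shows "Re (qform n A x) \<le> Re (mtrace A) * (\<Sum>k<n. (cmod (x k))\<^sup>2)"
proof -
  define p d where "p k = cmod (x k)" and "d k = Re (A $$ (k, k))" for k
  have "Re (cnj (x k) * A $$ (k, l) * x l) \<le> ((p k)\<^sup>2 * d l + (p l)\<^sup>2 * d k) / 2"
    if k: "k < n" and l: "l < n" for k l
  proof -
    have d: "d k \<ge> 0" "d l \<ge> 0"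
      using psd_mat_diag_nonneg[OF A] k l by (simp_all add: d_def)
    have "cmod (A $$ (k, l)) \<le> sqrt (d k * d l)"
      using psd_mat_entry_bound[OF A k l] by (simp add: d_def real_le_rsqrt)
    then have "p k * cmod (A $$ (k, l)) * p l \<le> p k * sqrt (d k * d l) * p l"
      by (simp add: p_def mult_left_mono mult_right_mono)
    then have "Re (cnj (x k) * A $$ (k, l) * x l) \<le> p k * sqrt (d k * d l) * p l"
      unfolding p_def by (metis complex_Re_le_cmod complex_mod_cnj norm_mult order.trans)
    also have "\<dots> = sqrt ((p k)\<^sup>2 * d l * ((p l)\<^sup>2 * d k))"
      by (simp add: p_def real_sqrt_mult mult_ac)
    also have "\<dots> \<le> ((p k)\<^sup>2 * d l + (p l)\<^sup>2 * d k) / 2"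
      using d by (intro arith_geo_mean_sqrt) simp_all
    finally show ?thesis .
  qed
  then have "Re (qform n A x) \<le> (\<Sum>k<n. \<Sum>l<n. ((p k)\<^sup>2 * d l + (p l)\<^sup>2 * d k) / 2)"
    unfolding qform_def Re_sum by (intro sum_mono) auto
  also have "\<dots> = ((\<Sum>k<n. \<Sum>l<n. (p k)\<^sup>2 * d l) + (\<Sum>k<n. \<Sum>l<n. (p l)\<^sup>2 * d k)) / 2"
    by (simp add: sum.distrib sum_divide_distrib add_divide_distrib)
  also have "\<dots> = (\<Sum>k<n. (p k)\<^sup>2) * (\<Sum>k<n. d k)"
    using sum.swap[of "\<lambda>k l. (p l)\<^sup>2 * d k" "{..<n}" "{..<n}"] by (simp add: sum_product)
  finally show ?thesis
    by (simp add: Re_mtrace[OF psd_mat_carrier[OF A]] d_def p_def mult.commute)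
qed

lemma index_mat_ct_mult_mult:
  assumes "T \<in> carrier_mat n m" "Q \<in> carrier_mat n n" "i < m" "j < m"
  shows "(mat_ct T * Q * T) $$ (i, j) = (\<Sum>k<n. \<Sum>l<n. cnj (T $$ (k, i)) * Q $$ (k, l) * T $$ (l, j))"
proof -
  have "(mat_ct T * Q * T) $$ (i, j) = (\<Sum>l<n. \<Sum>k<n. cnj (T $$ (k, i)) * Q $$ (k, l) * T $$ (l, j))"
    using assms by (simp add: scalar_prod_def atLeast0LessThan sum_distrib_right)
  also have "\<dots> = (\<Sum>k<n. \<Sum>l<n. cnj (T $$ (k, i)) * Q $$ (k, l) * T $$ (l, j))"
    by (rule sum.swap)
  finally show ?thesis .
qed

lemma sum_swap_nested:
  "(\<Sum>i\<in>A. \<Sum>j\<in>B. \<Sum>k\<in>C. \<Sum>l\<in>D. f i j k l) = (\<Sum>k\<in>C. \<Sum>l\<in>D. \<Sum>i\<in>A. \<Sum>j\<in>B. f i j k l)"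
  unfolding sum.cartesian_product[where A = C and B = D] sum.cartesian_product[where A = A and B = B]
    case_prod_unfold
  by (rule sum.swap)

lemma qform_congruence:
  assumes T: "T \<in> carrier_mat n m" and Q: "Q \<in> carrier_mat n n"
  shows "qform m (mat_ct T * Q * T) x = qform n Q (\<lambda>k. \<Sum>i<m. T $$ (k, i) * x i)"
proof -
  have "qform m (mat_ct T * Q * T) x
      = (\<Sum>i<m. \<Sum>j<m. cnj (x i) * (\<Sum>k<n. \<Sum>l<n. cnj (T $$ (k, i)) * Q $$ (k, l) * T $$ (l, j)) * x j)"
    unfolding qform_def by (intro sum.cong refl) (simp add: index_mat_ct_mult_mult[OF T Q])
  then show ?thesis
    unfolding qform_def
    by (simp add: sum_distrib_left sum_distrib_right sum_swap_nested[where A = "{..<m}" and B = "{..<m}" and C = "{..<n}" and D = "{..<n}"] mult_ac)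
qed

lemma psd_mat_congruence:
  assumes Q: "psd_mat n Q" and T: "T \<in> carrier_mat n m"
  shows "psd_mat m (mat_ct T * Q * T)"
proof (rule psd_matI)
  have Qc: "Q \<in> carrier_mat n n"
    using Q by (rule psd_mat_carrier)
  have Tc: "mat_ct T \<in> carrier_mat m n"
    using T by simp
  show "mat_ct T * Q * T \<in> carrier_mat m m"
    using Tc Qc T by (metis mult_carrier_mat)
  show "mat_ct (mat_ct T * Q * T) = mat_ct T * Q * T"
    using Tc Qc T psd_mat_hermitian[OF Q] by (simp add: mat_ct_mult assoc_mult_mat[OF Tc Qc T])
  show "0 \<le> Re (qform m (mat_ct T * Q * T) x)" for x
    unfolding qform_congruence[OF T Qc] by (rule psd_mat_qform_nonneg[OF Q])
qed

lemma trace_congruence_le: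
  assumes Q: "psd_mat n Q" and T: "T \<in> carrier_mat n m"
    and cols: "\<And>l. l < m \<Longrightarrow> (\<Sum>k<n. (cmod (T $$ (k, l)))\<^sup>2) \<le> 1"
  shows "Re (mtrace (mat_ct T * Q * T)) \<le> real m * Re (mtrace Q)"
proof -
  have Qc: "Q \<in> carrier_mat n n"
    using Q by (rule psd_mat_carrier)
  have "mtrace (mat_ct T * Q * T) = (\<Sum>l<m. (mat_ct T * Q * T) $$ (l, l))"
    using T by (simp add: mtrace_def)
  also have "\<dots> = (\<Sum>l<m. qform n Q (\<lambda>k. T $$ (k, l)))"
    unfolding qform_def by (intro sum.cong refl index_mat_ct_mult_mult[OF T Qc]) auto
  finally have "Re (mtrace (mat_ct T * Q * T)) = (\<Sum>l<m. Re (qform n Q (\<lambda>k. T $$ (k, l))))"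
    by simp
  also have "\<dots> \<le> (\<Sum>l<m. Re (mtrace Q) * 1)"
    using cols psd_mat_trace_nonneg[OF Q]
    by (intro sum_mono order.trans[OF psd_mat_qform_le_trace[OF Q]] mult_left_mono) auto
  finally show ?thesis
    by simp
qed

lemma A_R_carrier: "A_R lam d M L beta \<in> carrier_mat M L"
  by (simp add: A_R_def)

lemma A_T_carrier: "A_T lam N L theta w \<in> carrier_mat N L"
  by (simp add: A_T_def)

lemma Gam_carrier: "Gam L g \<in> carrier_mat L L"
  by (simp add: Gam_def)

lemma norm_A_T_entry:
  assumes "n < N" "l < L"
  shows "cmod (A_T lam N L theta w $$ (n, l)) = 1 / sqrt (real N)"
proof -
  have "A_T lam N L theta w $$ (n, l)
      = of_real (1 / sqrt (real N)) * exp (\<i> * of_real (- (2 * pi / lam * w n * cos (theta l))))"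
    using assms by (simp add: A_T_def)
  then show ?thesis
    by (simp only: norm_mult norm_exp_i_times norm_of_real) simp
qed

lemma A_T_column_norm: "l < L \<Longrightarrow> (\<Sum>n<N. (cmod (A_T lam N L theta w $$ (n, l)))\<^sup>2) \<le> 1"
  by (simp add: norm_A_T_entry power_divide)

lemma A_T_congruence_trace_le:
  assumes "psd_mat N Q" "Re (mtrace Q) \<le> P"
  shows "Re (mtrace (mat_ct (A_T lam N L theta w) * Q * A_T lam N L theta w)) \<le> real L * P"
  using trace_congruence_le[OF assms(1) A_T_carrier A_T_column_norm] assms(2)
  by (meson mult_left_mono of_nat_0_le_iff order.trans)

lemma smult_congruence:
  assumes X: "X \<in> carrier_mat m n" and Q: "Q \<in> carrier_mat n n"
  shows "(s \<cdot>\<^sub>m X) * Q * mat_ct (s \<cdot>\<^sub>m X) = (s * cnj s) \<cdot>\<^sub>m (X * Q * mat_ct X)"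
proof -
  have XQ: "X * Q \<in> carrier_mat m n" and Xct: "mat_ct X \<in> carrier_mat n m"
    using X Q by auto
  have "(s \<cdot>\<^sub>m X) * Q * mat_ct (s \<cdot>\<^sub>m X) = cnj s \<cdot>\<^sub>m (s \<cdot>\<^sub>m (X * Q * mat_ct X))"
    using mult_smult_assoc_mat[OF X Q] mult_smult_distrib[OF smult_carrier_mat[OF XQ] Xct]
      mult_smult_assoc_mat[OF XQ Xct]
    by (simp add: mat_ct_smult)
  also have "\<dots> = (s * cnj s) \<cdot>\<^sub>m (X * Q * mat_ct X)"
    by (rule eq_matI) auto
  finally show ?thesis .
qed

lemma congruence_mult_mat_ct:
  assumes R: "R \<in> carrier_mat m k" and T: "T \<in> carrier_mat n k" and Q: "Q \<in> carrier_mat n n"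
  shows "R * mat_ct T * Q * mat_ct (R * mat_ct T) = R * (mat_ct T * Q * T) * mat_ct R"
proof -
  have Tct: "mat_ct T \<in> carrier_mat k n" and Rct: "mat_ct R \<in> carrier_mat k m"
    using R T by simp_all
  have TQ: "mat_ct T * Q \<in> carrier_mat k n" and TR: "T * mat_ct R \<in> carrier_mat n m"
    and K: "mat_ct T * Q * T \<in> carrier_mat k k"
    using Tct Q T Rct by (metis mult_carrier_mat)+
  have "R * mat_ct T * Q * mat_ct (R * mat_ct T) = R * (mat_ct T * Q) * (T * mat_ct R)"
    using R T Tct by (simp add: mat_ct_mult assoc_mult_mat[OF R Tct Q])
  also have "\<dots> = R * (mat_ct T * Q * (T * mat_ct R))"
    using R TQ TR by (rule assoc_mult_mat)
  also have "\<dots> = R * (mat_ct T * Q * T * mat_ct R)"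
    by (simp only: assoc_mult_mat[OF TQ T Rct])
  also have "\<dots> = R * (mat_ct T * Q * T) * mat_ct R"
    by (rule assoc_mult_mat[OF R K Rct, symmetric])
  finally show ?thesis .
qed

lemma chan_covariance:
  assumes Q: "Q \<in> carrier_mat N N"
  shows "chan lam d M N L g beta theta w * Q * mat_ct (chan lam d M N L g beta theta w)
    = of_real (real M * real N) \<cdot>\<^sub>m
      (A_R lam d M L beta * Gam L g * (mat_ct (A_T lam N L theta w) * Q * A_T lam N L theta w) *
       mat_ct (Gam L g) * mat_ct (A_R lam d M L beta))"
proof -
  let ?R = "A_R lam d M L beta" and ?G = "Gam L g" and ?T = "A_T lam N L theta w"
  have R: "?R \<in> carrier_mat M L" and G: "?G \<in> carrier_mat L L" and T: "?T \<in> carrier_mat N L"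
    by (simp_all add: A_R_carrier Gam_carrier A_T_carrier)
  have RG: "?R * ?G \<in> carrier_mat M L"
    using R G by (rule mult_carrier_mat)
  have RGK: "?R * ?G * (mat_ct ?T * Q * ?T) \<in> carrier_mat M L"
    using RG T Q by (metis mult_carrier_mat mat_ct_carrier)
  have RGT: "?R * ?G * mat_ct ?T \<in> carrier_mat M N"
    using RG T by (metis mult_carrier_mat mat_ct_carrier)
  have "sqrt (real M * real N) * sqrt (real M * real N) = real M * real N"
    by simp
  then have s: "complex_of_real (sqrt (real M * real N)) * cnj (complex_of_real (sqrt (real M * real N)))
      = of_real (real M * real N)"
    by (simp flip: of_real_mult)
  have "?R * ?G * mat_ct ?T * Q * mat_ct (?R * ?G * mat_ct ?T)
      = ?R * ?G * (mat_ct ?T * Q * ?T) * (mat_ct ?G * mat_ct ?R)"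
    using congruence_mult_mat_ct[OF RG T Q] R G by (simp add: mat_ct_mult)
  also have "\<dots> = ?R * ?G * (mat_ct ?T * Q * ?T) * mat_ct ?G * mat_ct ?R"
    by (rule assoc_mult_mat[OF RGK mat_ct_carrier[OF G] mat_ct_carrier[OF R], symmetric])
  finally show ?thesis
    unfolding chan_def smult_congruence[OF RGT Q] s by (rule arg_cong)
qed

lemma SUP_le_SUP_reindex:
  fixes f :: "'a \<Rightarrow> 'c :: complete_lattice"
  assumes "\<And>x. x \<in> A \<Longrightarrow> h x \<in> B" and "\<And>x. x \<in> A \<Longrightarrow> f x \<le> g (h x)"
  shows "(SUP x\<in>A. f x) \<le> (SUP y\<in>B. g y)"
  using assms by (intro SUP_mono) blast

lemma msum_cong: "(\<And>u. u < K \<Longrightarrow> F u = G u) \<Longrightarrow> msum n F K = msum n G K"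
  by (induction K) auto

lemma msum_chan_covariance:
  assumes "\<forall>u<U. Q u \<in> carrier_mat (N u) (N u)"
  shows "msum M (\<lambda>u. chan lam d M (N u) (L u) (g u) (beta u) (theta u) (w u) * Q u *
      mat_ct (chan lam d M (N u) (L u) (g u) (beta u) (theta u) (w u))) U
    = msum M (\<lambda>u. of_real (real M * real (N u)) \<cdot>\<^sub>m
      (A_R lam d M (L u) (beta u) * Gam (L u) (g u) *
       (mat_ct (A_T lam (N u) (L u) (theta u) (w u)) * Q u * A_T lam (N u) (L u) (theta u) (w u)) *
       mat_ct (Gam (L u) (g u)) * mat_ct (A_R lam d M (L u) (beta u)))) U"
  using assms by (intro msum_cong chan_covariance) blast

theorem theorem1:
  fixes lam :: real and M U :: nat
    and N L :: "nat \<Rightarrow> nat"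
    and P W :: "nat \<Rightarrow> real"
    and gam :: "nat \<Rightarrow> nat \<Rightarrow> complex"
    and beta theta :: "nat \<Rightarrow> nat \<Rightarrow> real"
  assumes lam_pos: "lam > 0"
    and P_pos: "\<forall>u<U. P u > 0"
    and W_pos: "\<forall>u<U. W u > 0"
    and beta_rng: "\<forall>u<U. \<forall>l<L u. 0 \<le> beta u l \<and> beta u l \<le> pi"
    and theta_rng: "\<forall>u<U. \<forall>l<L u. 0 \<le> theta u l \<and> theta u l \<le> pi"
  shows
   "(SUP (Q, w) \<in> {(Q :: nat \<Rightarrow> complex mat, w :: nat \<Rightarrow> nat \<Rightarrow> real).
          (\<forall>u<U. psd_mat (N u) (Q u) \<and> Re (mtrace (Q u)) \<le> P u) \<and>
          (\<forall>u<U. (\<forall>n<N u. 0 \<le> w u n \<and> w u n \<le> W u) \<and>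
                 (\<forall>n<N u. \<forall>n'<N u. n \<noteq> n' \<longrightarrow> w u n \<noteq> w u n'))}.
       ereal (logdet (msum M (\<lambda>u.
           chan lam (lam / 2) M (N u) (L u) (gam u) (beta u) (theta u) (w u) * Q u *
           mat_ct (chan lam (lam / 2) M (N u) (L u) (gam u) (beta u) (theta u) (w u))) U
         + 1\<^sub>m M)))
    \<le>
    (SUP Qt \<in> {Qt :: nat \<Rightarrow> complex mat.
          \<forall>u<U. psd_mat (L u) (Qt u) \<and> Re (mtrace (Qt u)) \<le> real (L u) * P u}.
       ereal (logdet (msum M (\<lambda>u.
           complex_of_real (real M * real (N u)) \<cdot>\<^sub>m
             (A_R lam (lam / 2) M (L u) (beta u) * Gam (L u) (gam u) * Qt u *
              mat_ct (Gam (L u) (gam u)) * mat_ct (A_R lam (lam / 2) M (L u) (beta u)))) U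
         + 1\<^sub>m M)))"
proof (rule SUP_le_SUP_reindex[where h = "\<lambda>(Q, w) u.
    mat_ct (A_T lam (N u) (L u) (theta u) (w u)) * Q u * A_T lam (N u) (L u) (theta u) (w u)"],
    goal_cases feasible objective)
  case (feasible p)
  then show ?case
    by (auto simp: psd_mat_congruence A_T_carrier A_T_congruence_trace_le)
next
  case (objective p)
  obtain Q w where p: "p = (Q, w)"
    by (cases p)
  have carrier: "\<forall>u<U. Q u \<in> carrier_mat (N u) (N u)"
    using objective psd_mat_carrier unfolding p by simp
  show ?case
    unfolding p prod.case msum_chan_covariance[OF carrier] by (rule order_refl)
qed

end
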